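(* Let $\{A,B\}\cup\{C_\alpha:\alpha<\omega_1\}$ be a partition of $\omega_1$ with $|A|=|B|=\omega_1$ and $|C_\alpha|=\omega$ for all $\alpha<\omega_1$. Let $\mathbb X=\langle\omega_1,\rho\rangle$ and $\mathbb Y=\langle\omega_1,\sigma\rangle$ where $\rho$ is the equivalence relation whose classes are $A\cup B$ and the $C_\alpha$ ($\alpha<\omega_1$), and $\sigma$ the one whose classes are $A$, $B$ and the $C_\alpha$ ($\alpha<\omega_1$). Then $\mathbb X\sim_c\mathbb Y$, $\mathbb X\equiv_{\infty\omega}\mathbb Y$, and $\mathbb X\not\cong\mathbb Y$.
   Context: A condensation from $\langle X,\rho\rangle$ onto $\langle Y,\sigma\rangle$ is a bijection $F:X\to Y$ with $x\,\rho\,x'\Rightarrow F(x)\,\sigma\,F(x')$; $\mathbb X\sim_c\mathbb Y$ means condensations exist in both directions. $\mathbb X\equiv_{\infty\omega}\mathbb Y$ means $\mathbb X$ and $\mathbb Y$ satisfy the same sentences of the infinitary logic $L_{\infty\omega}$ (language with one binary relation symbol). *)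

theory Defs
  imports Main "HOL-Library.Countable_Set"
begin

(* Binary relational structures (universe = type): the universe of a structure is the whole type. *)

definition condensation :: "('a \<Rightarrow> 'a \<Rightarrow> bool) \<Rightarrow> ('b \<Rightarrow> 'b \<Rightarrow> bool) \<Rightarrow> ('a \<Rightarrow> 'b) \<Rightarrow> bool" where
  "condensation R S F \<longleftrightarrow> bij F \<and> (\<forall>x x'. R x x' \<longrightarrow> S (F x) (F x'))"

definition sim_c :: "('a \<Rightarrow> 'a \<Rightarrow> bool) \<Rightarrow> ('b \<Rightarrow> 'b \<Rightarrow> bool) \<Rightarrow> bool" where
  "sim_c R S \<longleftrightarrow> (\<exists>F. condensation R S F) \<and> (\<exists>G. condensation S R G)"

definition isomorphic :: "('a \<Rightarrow> 'a \<Rightarrow> bool) \<Rightarrow> ('b \<Rightarrow> 'b \<Rightarrow> bool) \<Rightarrow> bool" where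
  "isomorphic R S \<longleftrightarrow> (\<exists>F. bij F \<and> (\<forall>x x'. R x x' \<longleftrightarrow> S (F x) (F x')))"

(* Formulas of the infinitary logic with one binary relation symbol; conjunctions
   are indexed by the type 'i (repetitions allowed), variables are natural numbers. *)
datatype 'i fm =
    Eq nat nat
  | Rel nat nat
  | Neg "'i fm"
  | Conj "'i \<Rightarrow> 'i fm"
  | Exi nat "'i fm"

primrec fv :: "'i fm \<Rightarrow> nat set" where
  "fv (Eq x y) = {x, y}"
| "fv (Rel x y) = {x, y}"
| "fv (Neg \<phi>) = fv \<phi>"
| "fv (Conj f) = (\<Union>i. fv (f i))"
| "fv (Exi x \<phi>) = fv \<phi> - {x}"

primrec sat :: "('a \<Rightarrow> 'a \<Rightarrow> bool) \<Rightarrow> (nat \<Rightarrow> 'a) \<Rightarrow> 'i fm \<Rightarrow> bool" where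
  "sat R v (Eq x y) = (v x = v y)"
| "sat R v (Rel x y) = R (v x) (v y)"
| "sat R v (Neg \<phi>) = (\<not> sat R v \<phi>)"
| "sat R v (Conj f) = (\<forall>i. sat R v (f i))"
| "sat R v (Exi x \<phi>) = (\<exists>a. sat R (v(x := a)) \<phi>)"

(* Same sentences (formulas without free variables) with conjunctions indexed by 'i.
   Quantifying over all types 'i gives L_{\<infinity>\<omega>}-equivalence. *)
definition inf_equiv :: "'i itself \<Rightarrow> ('a \<Rightarrow> 'a \<Rightarrow> bool) \<Rightarrow> ('b \<Rightarrow> 'b \<Rightarrow> bool) \<Rightarrow> bool" where
  "inf_equiv _ R S \<longleftrightarrow>
     (\<forall>\<phi> :: 'i fm. fv \<phi> = {} \<longrightarrow> (\<forall>v w. sat R v \<phi> \<longleftrightarrow> sat S w \<phi>))"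

end

theory Submission
  imports Defs "HOL-Library.Disjoint_Sets" "HOL-Library.Countable_Set_Type"
begin

(* Both \<rho> and \<sigma> are equivalence relations with infinitely many classes, all of them
   infinite. Between two such relations, every partial isomorphism of finite assignments
   extends to one more point, so induction on formulas shows that they satisfy the same
   L_\<infinity>\<omega> sentences.
   The identity condenses \<sigma> onto \<rho>. Conversely, split the \<omega>_1 indices into two halves of
   size \<omega>_1: send A \<union> B onto A, the classes of the first half onto B, and the classes of the
   second half bijectively onto all the C_\<gamma>; every \<rho>-class lands inside a \<sigma>-class.
   Finally, an isomorphism would map classes onto classes, but \<rho> has only one uncountable
   class while \<sigma> has two. *)

unbundle cardinal_syntax

definition partial_iso ::
    "('a \<Rightarrow> 'a \<Rightarrow> bool) \<Rightarrow> ('b \<Rightarrow> 'b \<Rightarrow> bool) \<Rightarrow> (nat \<Rightarrow> 'a) \<Rightarrow> (nat \<Rightarrow> 'b) \<Rightarrow> nat set \<Rightarrow> bool" where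
  "partial_iso R S v w D \<longleftrightarrow>
     (\<forall>i\<in>D. \<forall>j\<in>D. (v i = v j \<longleftrightarrow> w i = w j) \<and> (R (v i) (v j) \<longleftrightarrow> S (w i) (w j)))"

(* The last clause says that R has infinitely many classes. *)
definition equivp_infinite_classes :: "('a \<Rightarrow> 'a \<Rightarrow> bool) \<Rightarrow> bool" where
  "equivp_infinite_classes R \<longleftrightarrow> equivp R \<and> (\<forall>x. infinite {y. R x y})
     \<and> (\<forall>F. finite F \<longrightarrow> (\<exists>y. \<forall>z\<in>F. \<not> R z y))"

lemma partial_iso_mono: "partial_iso R S v w D \<Longrightarrow> E \<subseteq> D \<Longrightarrow> partial_iso R S v w E"
  unfolding partial_iso_def by blast

lemma partial_iso_sym: "partial_iso R S v w D \<Longrightarrow> partial_iso S R w v D"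
  unfolding partial_iso_def by blast

lemma partial_iso_extend_point:
  assumes R: "equivp_infinite_classes R" and S: "equivp_infinite_classes S"
    and fin: "finite D" and p: "partial_iso R S v w D"
  shows "\<exists>b. \<forall>i\<in>D. (a = v i \<longleftrightarrow> b = w i) \<and> (R a (v i) \<longleftrightarrow> S b (w i))"
proof -
  have eqR: "equivp R" and eqS: "equivp S" and Sinf: "\<And>x. infinite {y. S x y}"
    and Snew: "\<And>F. finite F \<Longrightarrow> \<exists>y. \<forall>z\<in>F. \<not> S z y"
    using R S unfolding equivp_infinite_classes_def by blast+
  consider (equal) i where "i \<in> D" "a = v i"
    | (related) i where "i \<in> D" "R a (v i)" "\<forall>j\<in>D. a \<noteq> v j"
    | (fresh) "\<forall>j\<in>D. a \<noteq> v j \<and> \<not> R a (v j)"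
    by blast
  then show ?thesis
  proof cases
    case equal
    then show ?thesis using p by (intro exI[of _ "w i"]) (auto simp: partial_iso_def)
  next
    case related
    have "infinite ({y. S (w i) y} - w ` D)" using Sinf fin by auto
    then obtain b where b: "S (w i) b" "b \<notin> w ` D"
      using infinite_imp_nonempty by blast
    have "R a (v j) \<longleftrightarrow> S b (w j)" if "j \<in> D" for j
    proof -
      have "R a (v j) \<longleftrightarrow> R (v i) (v j)"
        using related(2) eqR by (meson equivp_symp equivp_transp)
      also have "\<dots> \<longleftrightarrow> S (w i) (w j)" using p related(1) that unfolding partial_iso_def by blast
      also have "\<dots> \<longleftrightarrow> S b (w j)" using b(1) eqS by (meson equivp_symp equivp_transp)
      finally show ?thesis .
    qed
    then show ?thesis using related(3) b(2) by blast
  next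
    case fresh
    obtain b where b: "\<forall>z\<in>w ` D. \<not> S z b" using Snew fin by blast
    have "b \<noteq> w j \<and> \<not> S b (w j)" if "j \<in> D" for j
      using b that eqS by (metis equivp_reflp equivp_symp imageI)
    then show ?thesis using fresh by blast
  qed
qed

lemma partial_iso_insert:
  assumes p: "partial_iso R S v w D" and x: "x \<notin> D"
    and ab: "\<forall>i\<in>D. (a = v i \<longleftrightarrow> b = w i) \<and> (R a (v i) \<longleftrightarrow> S b (w i))"
    and R: "equivp R" and S: "equivp S"
  shows "partial_iso R S (v(x := a)) (w(x := b)) (insert x D)"
proof -
  have "R (v i) a \<longleftrightarrow> S (w i) b" if "i \<in> D" for i
    using ab that R S by (meson equivp_symp)
  then show ?thesis
    using p x ab R S unfolding partial_iso_def by (auto simp: equivp_reflp)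
qed

lemma partial_iso_extend:
  assumes R: "equivp_infinite_classes R" and S: "equivp_infinite_classes S"
    and fin: "finite D" and p: "partial_iso R S v w D"
  shows "\<exists>b. partial_iso R S (v(x := a)) (w(x := b)) (insert x D)"
proof -
  have p': "partial_iso R S v w (D - {x})" using p by (rule partial_iso_mono) blast
  obtain b where "\<forall>i\<in>D - {x}. (a = v i \<longleftrightarrow> b = w i) \<and> (R a (v i) \<longleftrightarrow> S b (w i))"
    using partial_iso_extend_point[OF R S _ p'] fin by blast
  moreover have "equivp R" "equivp S" using R S unfolding equivp_infinite_classes_def by blast+
  ultimately have "partial_iso R S (v(x := a)) (w(x := b)) (insert x (D - {x}))"
    using partial_iso_insert[OF p'] by blast
  then show ?thesis by auto
qed

lemma sat_iff_partial_iso: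
  assumes R: "equivp_infinite_classes R" and S: "equivp_infinite_classes S"
  shows "finite (fv \<phi>) \<Longrightarrow> partial_iso R S v w (fv \<phi>) \<Longrightarrow> sat R v \<phi> \<longleftrightarrow> sat S w \<phi>"
proof (induction \<phi> arbitrary: v w)
  case (Conj f)
  have "sat R v (f i) \<longleftrightarrow> sat S w (f i)" for i
  proof (rule Conj.IH[OF rangeI])
    have sub: "fv (f i) \<subseteq> fv (Conj f)" by auto
    show "finite (fv (f i))" using finite_subset[OF sub Conj.prems(1)] .
    show "partial_iso R S v w (fv (f i))" using partial_iso_mono[OF Conj.prems(2) sub] .
  qed
  then show ?case by simp
next
  case (Exi x \<psi>)
  have sub: "fv \<psi> \<subseteq> insert x (fv (Exi x \<psi>))" by auto
  have fin: "finite (fv \<psi>)" using Exi.prems(1) finite_subset[OF sub] by blast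
  show ?case
  proof
    assume "sat R v (Exi x \<psi>)"
    then obtain a where a: "sat R (v(x := a)) \<psi>" by auto
    obtain b where "partial_iso R S (v(x := a)) (w(x := b)) (insert x (fv (Exi x \<psi>)))"
      using partial_iso_extend[OF R S Exi.prems] by blast
    then have "sat S (w(x := b)) \<psi>"
      using Exi.IH[OF fin] a partial_iso_mono[OF _ sub] by blast
    then show "sat S w (Exi x \<psi>)" by auto
  next
    assume "sat S w (Exi x \<psi>)"
    then obtain b where b: "sat S (w(x := b)) \<psi>" by auto
    obtain a where "partial_iso S R (w(x := b)) (v(x := a)) (insert x (fv (Exi x \<psi>)))"
      using partial_iso_extend[OF S R Exi.prems(1) partial_iso_sym[OF Exi.prems(2)]] by blast
    then have "sat R (v(x := a)) \<psi>"
      using Exi.IH[OF fin] b partial_iso_mono[OF partial_iso_sym sub] by blast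
    then show "sat R v (Exi x \<psi>)" by auto
  qed
qed (auto simp: partial_iso_def)

lemma inf_equiv_if_equivp_infinite_classes:
  assumes "equivp_infinite_classes R" and "equivp_infinite_classes S"
  shows "inf_equiv TYPE('i) R S"
  unfolding inf_equiv_def
  using sat_iff_partial_iso[OF assms] by (metis finite.emptyI empty_iff partial_iso_def)

lemma equivp_infinite_classes_partition:
  assumes P: "partition_on UNIV \<P>" and inf_blocks: "\<forall>X\<in>\<P>. infinite X" and inf: "infinite \<P>"
  shows "equivp_infinite_classes (\<lambda>x y. \<exists>X\<in>\<P>. x \<in> X \<and> y \<in> X)"
    (is "equivp_infinite_classes ?R")
proof -
  have cover: "\<exists>X\<in>\<P>. x \<in> X" for x using partition_onD1[OF P] by blast
  have unique: "X = Y" if "X \<in> \<P>" "Y \<in> \<P>" "x \<in> X" "x \<in> Y" for X Y x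
    using partition_onD2[OF P] that by (auto simp: pairwise_def disjnt_iff)
  have "equivp ?R"
  proof (rule equivpI)
    show "reflp ?R" using cover by (simp add: reflp_def)
    show "symp ?R" unfolding symp_def by blast
    show "transp ?R" unfolding transp_def by (metis unique)
  qed
  moreover have "infinite {y. ?R x y}" for x
    using cover[of x] inf_blocks finite_subset[of _ "{y. ?R x y}"] by blast
  moreover have "\<exists>y. \<forall>z\<in>F. \<not> ?R z y" if F: "finite F" for F
  proof -
    let ?block = "\<lambda>z. THE X. X \<in> \<P> \<and> z \<in> X"
    have "{X\<in>\<P>. X \<inter> F \<noteq> {}} \<subseteq> ?block ` F"
    proof
      fix X assume "X \<in> {X\<in>\<P>. X \<inter> F \<noteq> {}}"
      then obtain z where "X \<in> \<P>" "z \<in> X" "z \<in> F" by blast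
      then have "?block z = X" using unique by (intro the_equality) blast+
      with \<open>z \<in> F\<close> show "X \<in> ?block ` F" by blast
    qed
    then have "finite {X\<in>\<P>. X \<inter> F \<noteq> {}}" using F finite_surj by blast
    then have "infinite (\<P> - {X\<in>\<P>. X \<inter> F \<noteq> {}})" using inf by (rule Diff_infinite_finite)
    then obtain X where X: "X \<in> \<P>" "X \<inter> F = {}" using infinite_imp_nonempty by blast
    then obtain y where "y \<in> X" using inf_blocks by (metis ex_in_conv finite.emptyI)
    then show ?thesis using X unique by blast
  qed
  ultimately show ?thesis unfolding equivp_infinite_classes_def by blast
qed

lemma class_image_iso:
  assumes "bij F" and iso: "\<And>x x'. R x x' \<longleftrightarrow> S (F x) (F x')"
  shows "{u. S (F x) u} = F ` {y. R x y}"
proof -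
  have "F ` {y. R x y} = F ` {y. S (F x) (F y)}" using iso by simp
  also have "\<dots> = {u. S (F x) u} \<inter> range F" by auto
  finally show ?thesis using bij_is_surj[OF assms(1)] by simp
qed

lemma uncountable_if_ordIso_cardSuc_natLeq:
  assumes "|X| =o cardSuc natLeq"
  shows "uncountable X"
proof
  assume "countable X"
  then have "|X| \<le>o natLeq" using countable_card_le_natLeq by blast
  then have "cardSuc natLeq \<le>o natLeq"
    using ordIso_ordLeq_trans[OF ordIso_symmetric[OF assms]] by blast
  then show False using cardSuc_greater[OF natLeq_Card_order] not_ordLess_ordLeq by blast
qed

lemma infinite_UNIV_split:
  assumes "infinite (UNIV :: 'a set)"
  obtains J K and p :: "'a \<Rightarrow> 'a"
  where "J \<inter> K = {}" "J \<union> K = UNIV" "|J| =o |UNIV :: 'a set|" "bij_betw p K UNIV"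
proof -
  have "|UNIV <+> UNIV :: ('a + 'a) set| =o |UNIV :: 'a set|"
    using card_of_Plus_infinite1[OF assms ordLeq_refl[OF card_of_Card_order]] .
  then obtain g :: "'a + 'a \<Rightarrow> 'a" where g: "bij g"
    using card_of_ordIso by (metis UNIV_Plus_UNIV bij_betw_def)
  have inl: "bij_betw (g \<circ> Inl) UNIV (range (g \<circ> Inl))" and inr: "bij_betw (g \<circ> Inr) UNIV (range (g \<circ> Inr))"
    using g by (auto simp: bij_betw_def inj_on_def bij_def)
  show thesis
  proof
    show "range (g \<circ> Inl) \<inter> range (g \<circ> Inr) = {}" using g by (auto simp: bij_def inj_eq)
    have "x \<in> range (g \<circ> Inl) \<union> range (g \<circ> Inr)" for x
      using g by (cases "inv g x") (metis UnI1 UnI2 bij_inv_eq_iff comp_apply rangeI)+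
    then show "range (g \<circ> Inl) \<union> range (g \<circ> Inr) = UNIV" by blast
    show "|range (g \<circ> Inl)| =o |UNIV :: 'a set|"
      using inl card_of_ordIso ordIso_symmetric by blast
    show "bij_betw (inv_into UNIV (g \<circ> Inr)) (range (g \<circ> Inr)) UNIV"
      using bij_betw_inv_into[OF inr] .
  qed
qed

lemma bij_if_bij_betw_pieces:
  assumes f: "bij_betw f X X'" and g: "bij_betw g Y Y'" and h: "bij_betw h Z Z'"
    and dom: "X \<inter> Y = {}" "(X \<union> Y) \<inter> Z = {}" "X \<union> Y \<union> Z = UNIV"
    and ran: "X' \<inter> Y' = {}" "(X' \<union> Y') \<inter> Z' = {}" "X' \<union> Y' \<union> Z' = UNIV"
  shows "bij (\<lambda>x. if x \<in> X then f x else if x \<in> Y then g x else h x)" (is "bij ?F")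
proof -
  have "bij_betw ?F X X'" using f by (rule bij_betw_cong[THEN iffD1, rotated]) simp
  moreover have "bij_betw ?F Y Y'"
    using g by (rule bij_betw_cong[THEN iffD1, rotated]) (use dom in auto)
  moreover have "bij_betw ?F Z Z'"
    using h by (rule bij_betw_cong[THEN iffD1, rotated]) (use dom in auto)
  ultimately have "bij_betw ?F (X \<union> Y \<union> Z) (X' \<union> Y' \<union> Z')"
    using ran by (blast intro: bij_betw_combine)
  then show ?thesis using dom ran by simp
qed

locale partition_ABC =
  fixes A B :: "'a set" and C :: "'a \<Rightarrow> 'a set"
    and \<rho> \<sigma> :: "'a \<Rightarrow> 'a \<Rightarrow> bool"
  assumes AB: "A \<inter> B = {}"
    and AC: "\<And>\<alpha>. A \<inter> C \<alpha> = {}"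
    and BC: "\<And>\<alpha>. B \<inter> C \<alpha> = {}"
    and CC: "\<And>\<alpha> \<beta>. \<alpha> \<noteq> \<beta> \<Longrightarrow> C \<alpha> \<inter> C \<beta> = {}"
    and cover: "A \<union> B \<union> (\<Union>\<alpha>. C \<alpha>) = UNIV"
    and cardA: "|A| =o |UNIV :: 'a set|"
    and cardB: "|B| =o |UNIV :: 'a set|"
    and cardC: "\<And>\<alpha>. countable (C \<alpha>) \<and> infinite (C \<alpha>)"
    and rho: "\<And>x y. \<rho> x y \<longleftrightarrow> (x \<in> A \<union> B \<and> y \<in> A \<union> B) \<or> (\<exists>\<alpha>. x \<in> C \<alpha> \<and> y \<in> C \<alpha>)"
    and sigma: "\<And>x y. \<sigma> x y \<longleftrightarrow> (x \<in> A \<and> y \<in> A) \<or> (x \<in> B \<and> y \<in> B) \<or> (\<exists>\<alpha>. x \<in> C \<alpha> \<and> y \<in> C \<alpha>)"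
begin

lemma C_unique: "x \<in> C \<alpha> \<Longrightarrow> x \<in> C \<beta> \<Longrightarrow> \<alpha> = \<beta>"
  using CC by blast

lemma C_nonempty: "C \<alpha> \<noteq> {}"
  using cardC by (metis finite.emptyI)

lemma infinite_UNIV: "infinite (UNIV :: 'a set)"
  using cardC[of undefined] infinite_super[OF subset_UNIV] by blast

lemma infinite_A: "infinite A"
  using card_of_ordIso_finite[OF cardA] infinite_UNIV by blast

lemma infinite_B: "infinite B"
  using card_of_ordIso_finite[OF cardB] infinite_UNIV by blast

lemma infinite_range_C: "infinite (range C)"
proof -
  have "inj C" using C_unique C_nonempty by (metis ex_in_conv injI)
  then show ?thesis using finite_imageD infinite_UNIV by blast
qed

lemma rho_same_block: "\<rho> = (\<lambda>x y. \<exists>X\<in>insert (A \<union> B) (range C). x \<in> X \<and> y \<in> X)"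
  by (intro ext) (auto simp: rho)

lemma sigma_same_block: "\<sigma> = (\<lambda>x y. \<exists>X\<in>insert A (insert B (range C)). x \<in> X \<and> y \<in> X)"
  by (intro ext) (auto simp: sigma)

lemma equivp_infinite_classes_rho: "equivp_infinite_classes \<rho>"
  unfolding rho_same_block
proof (rule equivp_infinite_classes_partition)
  show "partition_on UNIV (insert (A \<union> B) (range C))"
  proof (rule partition_onI)
    show "\<Union> (insert (A \<union> B) (range C)) = UNIV" using cover by auto
    show "{} \<notin> insert (A \<union> B) (range C)" using C_nonempty infinite_A by auto
    show "disjnt X Y" if "X \<in> insert (A \<union> B) (range C)" "Y \<in> insert (A \<union> B) (range C)" "X \<noteq> Y" for X Y
      using that AC BC C_unique unfolding disjnt_def by blast
  qed
  show "\<forall>X\<in>insert (A \<union> B) (range C). infinite X" using infinite_A cardC by auto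
  show "infinite (insert (A \<union> B) (range C))" using infinite_range_C by simp
qed

lemma equivp_infinite_classes_sigma: "equivp_infinite_classes \<sigma>"
  unfolding sigma_same_block
proof (rule equivp_infinite_classes_partition)
  show "partition_on UNIV (insert A (insert B (range C)))"
  proof (rule partition_onI)
    show "\<Union> (insert A (insert B (range C))) = UNIV" using cover by auto
    show "{} \<notin> insert A (insert B (range C))" using C_nonempty infinite_A infinite_B by auto
    show "disjnt X Y" if "X \<in> insert A (insert B (range C))" "Y \<in> insert A (insert B (range C))" "X \<noteq> Y" for X Y
      using that AB AC BC C_unique unfolding disjnt_def by blast
  qed
  show "\<forall>X\<in>insert A (insert B (range C)). infinite X" using infinite_A infinite_B cardC by auto
  show "infinite (insert A (insert B (range C)))" using infinite_range_C by simp
qed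

lemma not_isomorphic_rho_sigma:
  assumes "uncountable (UNIV :: 'a set)"
  shows "\<not> isomorphic \<rho> \<sigma>"
proof
  assume "isomorphic \<rho> \<sigma>"
  then obtain F where F: "bij F" and iso: "\<And>x x'. \<rho> x x' \<longleftrightarrow> \<sigma> (F x) (F x')"
    unfolding isomorphic_def by blast
  have uncountable_AB: "uncountable A" "uncountable B"
    using cardA cardB assms card_of_ordIso countable_image bij_betw_imp_surj_on by metis+
  have in_AB: "inv F u \<in> A \<union> B" if "X \<subseteq> {v. \<sigma> u v}" "uncountable X" for u X
  proof (rule ccontr)
    assume "inv F u \<notin> A \<union> B"
    then obtain \<alpha> where \<alpha>: "inv F u \<in> C \<alpha>" using cover by blast
    have "{v. \<sigma> u v} = F ` {y. \<rho> (inv F u) y}"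
      using class_image_iso[of F \<rho> \<sigma>, OF F iso] F by (metis bij_inv_eq_iff)
    also have "{y. \<rho> (inv F u) y} \<subseteq> C \<alpha>" using \<alpha> C_unique AC BC unfolding rho by blast
    finally have "countable {v. \<sigma> u v}" using cardC countable_subset by (meson countable_image image_mono)
    then show False using that countable_subset by blast
  qed
  obtain a b where a: "a \<in> A" and b: "b \<in> B"
    using infinite_A infinite_B by (metis ex_in_conv finite.emptyI)
  have "A \<subseteq> {v. \<sigma> a v}" "B \<subseteq> {v. \<sigma> b v}" using a b unfolding sigma by blast+
  then have "\<rho> (inv F a) (inv F b)" using in_AB uncountable_AB unfolding rho by blast
  then have "\<sigma> a b" using iso F by (metis bij_inv_eq_iff)
  then show False using a b AB AC unfolding sigma by blast
qed

lemma card_of_A_Un_B: "|A \<union> B| =o |A|"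
proof -
  have "|A \<union> B| \<le>o |A|"
    using ordLeq_ordIso_trans[OF card_of_mono1 ordIso_symmetric[OF cardA]] by blast
  moreover have "|A| \<le>o |A \<union> B|" by (rule card_of_mono1) simp
  ultimately show ?thesis using ordIso_iff_ordLeq by blast
qed

lemma card_of_UN_C:
  assumes J: "|J| =o |UNIV :: 'a set|"
  shows "|\<Union>\<alpha>\<in>J. C \<alpha>| =o |UNIV :: 'a set|"
proof -
  define pick where "pick \<alpha> = (SOME x. x \<in> C \<alpha>)" for \<alpha>
  have pick: "pick \<alpha> \<in> C \<alpha>" for \<alpha>
    unfolding pick_def using C_nonempty by (simp add: some_in_eq)
  then have "inj_on pick J" using C_unique by (metis inj_onI)
  moreover have "pick ` J \<subseteq> (\<Union>\<alpha>\<in>J. C \<alpha>)" using pick by blast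
  ultimately have "|J| \<le>o |\<Union>\<alpha>\<in>J. C \<alpha>|" using card_of_ordLeq by blast
  then have "|UNIV :: 'a set| \<le>o |\<Union>\<alpha>\<in>J. C \<alpha>|"
    using ordIso_ordLeq_trans[OF ordIso_symmetric[OF J]] by blast
  moreover have "|\<Union>\<alpha>\<in>J. C \<alpha>| \<le>o |UNIV :: 'a set|" by (rule card_of_mono1) simp
  ultimately show ?thesis using ordIso_iff_ordLeq by blast
qed

lemma reindex_classes:
  assumes p: "bij_betw p K UNIV"
  obtains e where "bij_betw e (\<Union>\<alpha>\<in>K. C \<alpha>) (\<Union>\<gamma>. C \<gamma>)"
    and "\<And>\<alpha>. \<alpha> \<in> K \<Longrightarrow> e ` C \<alpha> \<subseteq> C (p \<alpha>)"
proof -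
  define idx where "idx x = (THE \<alpha>. x \<in> C \<alpha>)" for x
  have idx: "idx x = \<alpha>" if "x \<in> C \<alpha>" for x \<alpha>
    unfolding idx_def using that C_unique by blast
  define e where "e x = from_nat_into (C (p (idx x))) (to_nat_on (C (idx x)) x)" for x
  have e: "bij_betw e (C \<alpha>) (C (p \<alpha>))" for \<alpha>
  proof -
    have "bij_betw (from_nat_into (C (p \<alpha>)) \<circ> to_nat_on (C \<alpha>)) (C \<alpha>) (C (p \<alpha>))"
      by (rule bij_betw_trans[OF to_nat_on_infinite bij_betw_from_nat_into]) (use cardC in auto)
    moreover have "e x = (from_nat_into (C (p \<alpha>)) \<circ> to_nat_on (C \<alpha>)) x" if "x \<in> C \<alpha>" for x
      using that by (simp add: e_def idx)
    ultimately show ?thesis using bij_betw_cong by blast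
  qed
  have "disjoint_family_on (\<lambda>\<alpha>. C (p \<alpha>)) K"
    using p CC unfolding disjoint_family_on_def bij_betw_def inj_on_def by blast
  then have "bij_betw e (\<Union>\<alpha>\<in>K. C \<alpha>) (\<Union>\<alpha>\<in>K. C (p \<alpha>))"
    using bij_betw_UNION_disjoint e by blast
  moreover have "(\<Union>\<alpha>\<in>K. C (p \<alpha>)) = (\<Union>\<gamma>. C \<gamma>)"
    using p unfolding bij_betw_def by (metis image_image)
  moreover have "e ` C \<alpha> \<subseteq> C (p \<alpha>)" for \<alpha> using e bij_betw_imp_surj_on by blast
  ultimately show thesis using that by simp
qed

lemma bij_merging_A_B:
  obtains F where "bij F" and "F ` (A \<union> B) \<subseteq> A" and "\<And>\<alpha>. F ` C \<alpha> \<subseteq> B \<or> (\<exists>\<gamma>. F ` C \<alpha> \<subseteq> C \<gamma>)"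
proof -
  obtain J K and p :: "'a \<Rightarrow> 'a" where JK: "J \<inter> K = {}" "J \<union> K = UNIV"
    and J: "|J| =o |UNIV :: 'a set|" and p: "bij_betw p K UNIV"
    using infinite_UNIV_split[OF infinite_UNIV] by metis
  define U where "U = (\<Union>\<alpha>\<in>J. C \<alpha>)"
  define V where "V = (\<Union>\<alpha>\<in>K. C \<alpha>)"
  obtain k where k: "bij_betw k (A \<union> B) A" using card_of_A_Un_B card_of_ordIso by blast
  have "|U| =o |B|"
    unfolding U_def using ordIso_transitive[OF card_of_UN_C[OF J] ordIso_symmetric[OF cardB]] .
  then obtain m where m: "bij_betw m U B" using card_of_ordIso by blast
  obtain e where e: "bij_betw e V (\<Union>\<gamma>. C \<gamma>)" and eC: "\<And>\<alpha>. \<alpha> \<in> K \<Longrightarrow> e ` C \<alpha> \<subseteq> C (p \<alpha>)"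
    using reindex_classes[OF p] unfolding V_def by metis
  define F where "F = (\<lambda>x. if x \<in> A \<union> B then k x else if x \<in> U then m x else e x)"
  have AB_U: "(A \<union> B) \<inter> U = {}" and ABU_V: "(A \<union> B \<union> U) \<inter> V = {}"
    using AC BC JK C_unique unfolding U_def V_def by blast+
  have "U \<union> V = (\<Union>\<gamma>. C \<gamma>)" unfolding U_def V_def using JK(2) by (metis UN_Un)
  then have ABUV: "A \<union> B \<union> U \<union> V = UNIV" using cover by (simp add: Un_assoc)
  have AB_C: "(A \<union> B) \<inter> (\<Union>\<gamma>. C \<gamma>) = {}" using AC BC by blast
  have "bij F"
    unfolding F_def by (rule bij_if_bij_betw_pieces[OF k m e AB_U ABU_V ABUV AB AB_C cover])
  moreover have "F ` (A \<union> B) \<subseteq> A" using k by (auto simp: F_def bij_betw_def)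
  moreover have "F ` C \<alpha> \<subseteq> B \<or> (\<exists>\<gamma>. F ` C \<alpha> \<subseteq> C \<gamma>)" for \<alpha>
  proof (cases "\<alpha> \<in> J")
    case True
    then have "C \<alpha> \<subseteq> U" unfolding U_def by blast
    then have "F ` C \<alpha> \<subseteq> B" using m AB_U by (auto simp: F_def bij_betw_def)
    then show ?thesis ..
  next
    case False
    then have "\<alpha> \<in> K" "C \<alpha> \<subseteq> V" using JK unfolding V_def by blast+
    then have "F ` C \<alpha> \<subseteq> C (p \<alpha>)" using eC ABU_V by (fastforce simp: F_def)
    then show ?thesis by blast
  qed
  ultimately show thesis using that by blast
qed

lemma condensation_rho_sigma: "\<exists>F. condensation \<rho> \<sigma> F"
proof -
  obtain F where "bij F" and AB: "F ` (A \<union> B) \<subseteq> A" and C: "\<And>\<alpha>. F ` C \<alpha> \<subseteq> B \<or> (\<exists>\<gamma>. F ` C \<alpha> \<subseteq> C \<gamma>)"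
    using bij_merging_A_B by blast
  have "\<sigma> (F x) (F y)" if "\<rho> x y" for x y
    using that AB C[of \<alpha> for \<alpha>] unfolding rho sigma by (metis image_subset_iff)
  then show ?thesis using \<open>bij F\<close> unfolding condensation_def by blast
qed

lemma sim_c_rho_sigma: "sim_c \<rho> \<sigma>"
proof -
  have "condensation \<sigma> \<rho> id" unfolding condensation_def rho sigma by auto
  then show ?thesis using condensation_rho_sigma unfolding sim_c_def by blast
qed

end

theorem mainTheorem11:
  fixes A B :: "'a set" and C :: "'a \<Rightarrow> 'a set"
    and \<rho> \<sigma> :: "'a \<Rightarrow> 'a \<Rightarrow> bool"
  assumes omega1: "(card_of (UNIV :: 'a set), cardSuc natLeq) \<in> ordIso"
    and AB: "A \<inter> B = {}"
    and AC: "\<And>\<alpha>. A \<inter> C \<alpha> = {}"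
    and BC: "\<And>\<alpha>. B \<inter> C \<alpha> = {}"
    and CC: "\<And>\<alpha> \<beta>. \<alpha> \<noteq> \<beta> \<Longrightarrow> C \<alpha> \<inter> C \<beta> = {}"
    and cover: "A \<union> B \<union> (\<Union>\<alpha>. C \<alpha>) = UNIV"
    and cardA: "(card_of A, card_of (UNIV :: 'a set)) \<in> ordIso"
    and cardB: "(card_of B, card_of (UNIV :: 'a set)) \<in> ordIso"
    and cardC: "\<And>\<alpha>. countable (C \<alpha>) \<and> infinite (C \<alpha>)"
    and rho: "\<And>x y. \<rho> x y \<longleftrightarrow> (x \<in> A \<union> B \<and> y \<in> A \<union> B) \<or> (\<exists>\<alpha>. x \<in> C \<alpha> \<and> y \<in> C \<alpha>)"
    and sigma: "\<And>x y. \<sigma> x y \<longleftrightarrow> (x \<in> A \<and> y \<in> A) \<or> (x \<in> B \<and> y \<in> B) \<or> (\<exists>\<alpha>. x \<in> C \<alpha> \<and> y \<in> C \<alpha>)"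
  shows "sim_c \<rho> \<sigma> \<and> inf_equiv TYPE('i) \<rho> \<sigma> \<and> \<not> isomorphic \<rho> \<sigma>"
proof -
  interpret partition_ABC A B C \<rho> \<sigma>
    by (rule partition_ABC.intro[OF AB AC BC CC cover cardA cardB cardC rho sigma])
  have "uncountable (UNIV :: 'a set)"
    using omega1 by (rule uncountable_if_ordIso_cardSuc_natLeq)
  then show ?thesis
    using sim_c_rho_sigma not_isomorphic_rho_sigma
      inf_equiv_if_equivp_infinite_classes[OF equivp_infinite_classes_rho equivp_infinite_classes_sigma]
    by blast
qed

end
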